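(* For every integer $n\ge 53$, $5^n$ is selfcondensable.
   Context: For a finite nonempty multiset $S$ of real numbers, $V(S)$ is the smallest set of real numbers such that: (1) if $|S|=1$ then $S\subseteq V(S)$; (2) if $|S|\ge 2$, then for all nonempty multisets $A,B$ with $A+B=S$ (multiplicities add) and all $a\in V(A)$, $b\in V(B)$, each of $a+b,\ a-b,\ b-a,\ ab,\ a/b,\ b/a,\ a^b,\ b^a$ lies in $V(S)$ whenever it is a well-defined real number; (3) if $a\in V(S)$ is a nonnegative integer then $a!\in V(S)$ (with $0!=1$). A positive integer $N$ is selfcondensable if $N\in V(S_N)$, where $S_N$ is the multiset of the digits of the decimal representation of $N$ (each digit counted with its multiplicity). *)

theory Defs
  imports Complex_Main "HOL-Library.Multiset"
begin

text \<open>Real exponentiation a^b, defined exactly when it is a well-defined real number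
  (conservative reading): positive base with arbitrary real exponent; zero base with
  positive exponent; negative base with integer exponent.\<close>
definition pow_result :: "real \<Rightarrow> real \<Rightarrow> real \<Rightarrow> bool" where
  "pow_result a b c \<longleftrightarrow>
     (a > 0 \<and> c = a powr b) \<or>
     (a = 0 \<and> b > 0 \<and> c = 0) \<or>
     (a < 0 \<and> b \<in> \<int> \<and> c = a powi \<lfloor>b\<rfloor>)"

definition combine :: "real \<Rightarrow> real \<Rightarrow> real set" where
  "combine a b = {a + b, a - b, b - a, a * b}
      \<union> (if b \<noteq> 0 then {a / b} else {}) \<union> (if a \<noteq> 0 then {b / a} else {})
      \<union> {c. pow_result a b c} \<union> {c. pow_result b a c}"

inductive inV :: "real multiset \<Rightarrow> real \<Rightarrow> bool" where
  single: "inV {#x#} x"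
| comb: "A \<noteq> {#} \<Longrightarrow> B \<noteq> {#} \<Longrightarrow> inV A a \<Longrightarrow> inV B b \<Longrightarrow> c \<in> combine a b
           \<Longrightarrow> inV (A + B) c"
| factorial: "inV S a \<Longrightarrow> a = real k \<Longrightarrow> inV S (fact k)"

fun digits10 :: "nat \<Rightarrow> nat list" where
  "digits10 n = (if n < 10 then [n] else n mod 10 # digits10 (n div 10))"

definition digit_mset :: "nat \<Rightarrow> real multiset" where
  "digit_mset N = image_mset real (mset (digits10 N))"

definition selfcondensable :: "nat \<Rightarrow> bool" where
  "selfcondensable N \<longleftrightarrow> N > 0 \<and> inV (digit_mset N) (real N)"

end

theory Submission
  imports Defs
begin

text \<open>The last digit of \<open>5^n\<close> is 5 and the remaining digits number roughly \<open>0.7 n\<close>.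
  Among any five decimal digits, one or two already evaluate to 1: a digit 0 (as 0!), a
  digit 1, a repeated digit \<open>d/d\<close>, or consecutive digits \<open>(d+1) - d\<close>; otherwise at most
  four digits would fit in \<open>{2..9}\<close> without repetitions or neighbours. Peeling off ones this
  way, the remaining digits evaluate to \<open>n\<close> through its binary expansion
  \<open>n = (n div 2) * (1 + 1) + n mod 2\<close>, which for \<open>n < 2^(k+1)\<close> costs at most \<open>6k + 5\<close>
  digits; \<open>5^n\<close> has that many digits besides the last one as soon as \<open>n \<ge> 53\<close>, and then
  \<open>5^n\<close> is obtained from the final 5 as \<open>5 powr n\<close>.\<close>

lemma inV_nonempty: "inV M v \<Longrightarrow> M \<noteq> {#}"
  by (induction rule: inV.induct) auto

lemma inV_combine: "inV A a \<Longrightarrow> inV B b \<Longrightarrow> c \<in> combine a b \<Longrightarrow> inV (A + B) c"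
  using inV.comb inV_nonempty by blast

lemma inV_add: "inV A a \<Longrightarrow> inV B b \<Longrightarrow> inV (A + B) (a + b)"
  by (erule inV_combine) (auto simp: combine_def)

lemma inV_mult: "inV A a \<Longrightarrow> inV B b \<Longrightarrow> inV (A + B) (a * b)"
  by (erule inV_combine) (auto simp: combine_def)

lemma inV_powr: "inV A a \<Longrightarrow> inV B b \<Longrightarrow> a > 0 \<Longrightarrow> inV (A + B) (a powr b)"
  by (erule inV_combine) (auto simp: combine_def pow_result_def)

lemma inV_exists: "M \<noteq> {#} \<Longrightarrow> \<exists>v. inV M v"
proof (induction M)
  case (add x M)
  then show ?case
    using inV.single inV_add[of "{#x#}" x M] by (cases "M = {#}") auto
qed simp

lemma inV_one_add: "inV A 1 \<Longrightarrow> B \<noteq> {#} \<Longrightarrow> inV (A + B) 1"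
  using inV_exists[of B] inV_powr[of A 1 B] by auto

lemma inV_zero_one: "inV {#0#} 1"
  using inV.factorial[OF inV.single, of 0 0] by simp

lemma inV_div_self: "x \<noteq> 0 \<Longrightarrow> inV {#x, x#} 1"
  using inV_combine[OF inV.single inV.single, of "x / x" x x]
  by (simp add: combine_def)

lemma inV_diff_succ: "inV {#x, x + 1#} 1"
  using inV_combine[OF inV.single inV.single, of 1 x "x + 1"]
  by (simp add: combine_def add_mset_commute)

section \<open>Five digits contain a representation of 1\<close>

lemma card_le_if_no_consecutive:
  fixes A :: "nat set"
  assumes "A \<subseteq> {2 * a..<2 * b}" and "\<And>x. x \<in> A \<Longrightarrow> Suc x \<notin> A"
  shows "card A \<le> b - a"
proof -
  have "inj_on (\<lambda>x. x div 2) A"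
  proof (rule inj_onI)
    fix x y assume "x \<in> A" "y \<in> A" "x div 2 = y div 2"
    then have "x = y \<or> y = Suc x \<or> x = Suc y" by presburger
    then show "x = y" using assms(2) \<open>x \<in> A\<close> \<open>y \<in> A\<close> by blast
  qed
  moreover have "(\<lambda>x. x div 2) ` A \<subseteq> {a..<b}"
  proof
    fix z assume "z \<in> (\<lambda>x. x div 2) ` A"
    then obtain x where "z = x div 2" "2 * a \<le> x" "x < 2 * b"
      using assms(1) by auto
    then show "z \<in> {a..<b}" by auto
  qed
  ultimately have "card A \<le> card {a..<b}"
    by (metis card_image card_mono finite_atLeastLessThan)
  then show ?thesis by simp
qed

lemma size_eq_card_set_mset:
  assumes "\<And>x. count M x \<le> 1"
  shows "size M = card (set_mset M)"
proof -
  have "M = mset_set (set_mset M)"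
  proof (rule multiset_eqI)
    fix x
    show "count M x = count (mset_set (set_mset M)) x"
    proof (cases "x \<in># M")
      case True
      then have "0 < count M x" by simp
      then have "count M x = 1" using assms[of x] by linarith
      with True show ?thesis by (simp add: count_mset_set)
    qed (simp add: count_mset_set not_in_iff)
  qed
  then show ?thesis by (metis finite_set_mset size_mset_set)
qed

lemma one_from_five_digits:
  fixes N :: "nat multiset"
  assumes digits: "\<forall>d\<in>#N. d < 10" and five: "5 \<le> size N"
  obtains S where "S \<subseteq># N" "size S \<le> 2" "inV (image_mset real S) 1"
proof (cases "0 \<in># N \<or> 1 \<in># N \<or> (\<exists>d>0. {#d, d#} \<subseteq># N) \<or> (\<exists>d. {#d, Suc d#} \<subseteq># N)")
  case True
  then show ?thesis
  proof (elim disjE exE conjE)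
    assume "0 \<in># N"
    then show ?thesis using that[of "{#0#}"] inV_zero_one by simp
  next
    assume "1 \<in># N"
    then show ?thesis using that[of "{#1#}"] inV.single[of 1] by simp
  next
    fix d :: nat assume "d > 0" "{#d, d#} \<subseteq># N"
    then show ?thesis using that[of "{#d, d#}"] inV_div_self[of "real d"] by simp
  next
    fix d assume "{#d, Suc d#} \<subseteq># N"
    then show ?thesis using that[of "{#d, Suc d#}"] inV_diff_succ[of "real d"] by (simp add: add.commute)
  qed
next
  case False
  have "count N x \<le> 1" for x
  proof (rule ccontr)
    assume "\<not> count N x \<le> 1"
    then have "{#x, x#} \<subseteq># N" by (auto simp: subseteq_mset_def)
    moreover have "x \<noteq> 0" using \<open>\<not> count N x \<le> 1\<close> False by (metis count_eq_zero_iff not_le le0)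
    ultimately show False using False by blast
  qed
  then have "size N = card (set_mset N)" by (rule size_eq_card_set_mset)
  also have "\<dots> \<le> 5 - 1"
  proof (rule card_le_if_no_consecutive)
    show "set_mset N \<subseteq> {2 * 1..<2 * 5}"
    proof
      fix x assume "x \<in># N"
      moreover have "0 \<notin># N" "1 \<notin># N" using False by simp_all
      ultimately have "x \<noteq> 0" "x \<noteq> 1" by metis+
      then show "x \<in> {2 * 1..<2 * 5}" using digits \<open>x \<in># N\<close> by auto
    qed
    show "Suc x \<notin> set_mset N" if "x \<in> set_mset N" for x
    proof
      assume "Suc x \<in> set_mset N"
      then have "{#x, Suc x#} \<subseteq># N"
        using that by (simp add: insert_subset_eq_iff in_diff_count)
      then show False using False by blast
    qed
  qed
  finally show ?thesis using five by simp
qed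

lemma split_one_from_five_digits:
  fixes N :: "nat multiset"
  assumes "\<forall>d\<in>#N. d < 10" and "5 \<le> size N"
  obtains S T where "N = S + T" "size N \<le> size T + 2" "inV (image_mset real S) 1"
proof -
  obtain S where S: "S \<subseteq># N" "size S \<le> 2" "inV (image_mset real S) 1"
    using one_from_five_digits[OF assms] .
  show thesis
  proof (rule that)
    show "N = S + (N - S)" using S(1) by simp
    show "size N \<le> size (N - S) + 2" using S(1,2) by (simp add: size_Diff_submset)
  qed (fact S(3))
qed

section \<open>Building \<open>n\<close> from ones\<close>

text \<open>The number of ones in the expression \<open>n = (n div 2) * (1 + 1) + n mod 2\<close>,
  unfolded recursively down to \<open>1\<close>.\<close>
fun binary_ones :: "nat \<Rightarrow> nat" where
  "binary_ones n = (if n \<le> 1 then 1 else binary_ones (n div 2) + 2 + n mod 2)"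

declare binary_ones.simps [simp del]

lemma binary_ones_pos: "1 \<le> binary_ones n"
  by (subst binary_ones.simps) simp

lemma binary_ones_le:
  assumes "1 \<le> n" and "n < 2 ^ k"
  shows "binary_ones n \<le> 3 * k - 2"
  using assms
proof (induction n arbitrary: k rule: less_induct)
  case (less n)
  show ?case
  proof (cases "n = 1")
    case True
    then have "k \<ge> 1" using less.prems by (cases k) auto
    then show ?thesis using True by (simp add: binary_ones.simps)
  next
    case False
    then obtain k' where k: "k = Suc k'" using less.prems by (cases k) auto
    have "n div 2 < 2 ^ k'" "1 \<le> n div 2" "n div 2 < n"
      using less.prems False k by auto
    then have "binary_ones (n div 2) \<le> 3 * k' - 2" "k' \<ge> 1"
      using less.IH by (auto simp: Suc_le_eq intro: Nat.gr0I)
    moreover have "binary_ones n \<le> binary_ones (n div 2) + 3"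
      using False less.prems by (subst binary_ones.simps) auto
    ultimately show ?thesis using k by linarith
  qed
qed

lemma inV_of_nat_from_digits:
  fixes N :: "nat multiset"
  assumes "\<forall>d\<in>#N. d < 10" and "2 * binary_ones n + 3 \<le> size N" and "1 \<le> n"
  shows "inV (image_mset real N) (real n)"
  using assms
proof (induction n arbitrary: N rule: less_induct)
  case (less n)
  have "5 \<le> size N" using less.prems(2) binary_ones_pos[of n] by linarith
  then obtain S1 T1 where N: "N = S1 + T1" "size N \<le> size T1 + 2"
    and one1: "inV (image_mset real S1) 1"
    using split_one_from_five_digits less.prems(1) by blast
  show ?case
  proof (cases "n = 1")
    case True
    have "T1 \<noteq> {#}" using N(2) \<open>5 \<le> size N\<close> by auto
    then show ?thesis using inV_one_add[OF one1, of "image_mset real T1"] N(1) True by simp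
  next
    case False
    define q r where "q = n div 2" and "r = n mod 2"
    have n: "n = q * 2 + r" and q: "1 \<le> q" "q < n" and r: "r \<le> 1"
      using False less.prems(3) by (auto simp: q_def r_def)
    have ones: "binary_ones n = binary_ones q + 2 + r"
      using False less.prems(3) by (subst binary_ones.simps) (simp add: q_def r_def)
    have "5 \<le> size T1" using N(2) less.prems(2) ones binary_ones_pos[of q] by linarith
    moreover have "\<forall>d\<in>#T1. d < 10" using less.prems(1) N(1) by simp
    ultimately obtain S2 T2 where T1: "T1 = S2 + T2" "size T1 \<le> size T2 + 2"
      and one2: "inV (image_mset real S2) 1"
      using split_one_from_five_digits by blast
    have two: "inV (image_mset real (S1 + S2)) 2"
      using inV_add[OF one1 one2] by simp
    have digits2: "\<forall>d\<in>#T2. d < 10" using less.prems(1) N(1) T1(1) by simp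
    show ?thesis
    proof (cases "r = 0")
      case True
      have "inV (image_mset real T2) (real q)"
        using less.IH[OF q(2) digits2 _ q(1)] N(2) T1(2) less.prems(2) ones True by linarith
      from inV_mult[OF this two] have "inV (image_mset real (T2 + (S1 + S2))) (real q * 2)"
        by simp
      then show ?thesis using N(1) T1(1) n True by (simp add: ac_simps)
    next
      case False
      then have "r = 1" using r by simp
      have "5 \<le> size T2" using N(2) T1(2) less.prems(2) ones binary_ones_pos[of q] by linarith
      then obtain S3 T3 where T2: "T2 = S3 + T3" "size T2 \<le> size T3 + 2"
        and one3: "inV (image_mset real S3) 1"
        using split_one_from_five_digits digits2 by blast
      have "2 * binary_ones q + 3 \<le> size T3"
        using N(2) T1(2) T2(2) less.prems(2) ones \<open>r = 1\<close> by linarith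
      moreover have "\<forall>d\<in>#T3. d < 10" using digits2 T2(1) by simp
      ultimately have "inV (image_mset real T3) (real q)"
        using less.IH[OF q(2) _ _ q(1)] by blast
      from inV_add[OF inV_mult[OF this two] one3]
      have "inV (image_mset real (T3 + (S1 + S2) + S3)) (real q * 2 + 1)" by simp
      then show ?thesis using N(1) T1(1) T2(1) n \<open>r = 1\<close> by (simp add: ac_simps)
    qed
  qed
qed

section \<open>The digits of \<open>5^n\<close>\<close>

declare digits10.simps [simp del]

lemma digits10_lt_10: "d \<in> set (digits10 N) \<Longrightarrow> d < 10"
  by (induction N rule: digits10.induct) (subst (asm) digits10.simps, auto split: if_splits)

lemma length_digits10_gt: "10 ^ j \<le> N \<Longrightarrow> j < length (digits10 N)"
proof (induction j arbitrary: N)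
  case 0
  then show ?case by (subst digits10.simps) simp
next
  case (Suc j)
  then have "10 \<le> N" "10 ^ j \<le> N div 10"
    using le_trans[OF _ Suc.prems, of 10] by (auto simp: less_eq_div_iff_mult_less_eq)
  then show ?case using Suc.IH by (subst digits10.simps) simp
qed

lemma five_pow_mod_10: "1 \<le> n \<Longrightarrow> (5::nat) ^ n mod 10 = 5"
proof (induction n rule: dec_induct)
  case (step m)
  then show ?case by (simp add: mod_mult_right_eq[of 5 "5 ^ m" 10, symmetric])
qed simp

lemma ten_pow_le_five_pow_two_pow: "6 \<le> k \<Longrightarrow> (10::nat) ^ (6 * k + 5) \<le> 5 ^ 2 ^ k"
proof (induction k rule: dec_induct)
  case (step k)
  have "(5::nat) ^ 64 \<le> 5 ^ 2 ^ k"
    using power_increasing[of 6 k "2::nat"] step(1) by (intro power_increasing) auto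
  then have "(10::nat) ^ 6 \<le> 5 ^ 2 ^ k" by (rule le_trans[rotated]) simp
  have "(10::nat) ^ (6 * Suc k + 5) = 10 ^ 6 * 10 ^ (6 * k + 5)"
    by (subst power_add[symmetric]) simp
  also have "\<dots> \<le> 5 ^ 2 ^ k * 5 ^ 2 ^ k"
    using \<open>10 ^ 6 \<le> 5 ^ 2 ^ k\<close> step(3) by (rule mult_le_mono)
  also have "\<dots> = 5 ^ 2 ^ Suc k"
    by (simp flip: power_add add: mult_2)
  finally show ?case .
qed simp

lemma ten_pow_le_five_pow:
  assumes "53 \<le> n" and "2 ^ k \<le> n"
  shows "(10::nat) ^ (6 * k + 5) \<le> 5 ^ n"
proof (cases "k \<le> 5")
  case True
  have "(10::nat) ^ (6 * k + 5) \<le> 10 ^ 35" using True by (intro power_increasing) auto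
  also have "\<dots> \<le> 5 ^ 53" by simp
  also have "\<dots> \<le> 5 ^ n" using assms(1) by (intro power_increasing) auto
  finally show ?thesis .
next
  case False
  then have "(10::nat) ^ (6 * k + 5) \<le> 5 ^ 2 ^ k" by (intro ten_pow_le_five_pow_two_pow) simp
  also have "\<dots> \<le> 5 ^ n" using assms(2) by (intro power_increasing) auto
  finally show ?thesis .
qed

theorem lemma7p2:
  fixes n :: nat
  assumes "n \<ge> 53"
  shows "selfcondensable (5 ^ n)"
proof -
  obtain k where k: "2 ^ k \<le> n" "n < 2 ^ (k + 1)"
    using ex_power_ivl1[of 2 n] assms by auto
  have big: "(10::nat) ^ (6 * k + 4) \<le> 5 ^ n div 10"
    using ten_pow_le_five_pow[OF assms k(1)]
    by (simp add: less_eq_div_iff_mult_less_eq add.commute flip: power_Suc2)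
  define D where "D = mset (digits10 (5 ^ n div 10))"
  have "6 * k + 4 < size D"
    using length_digits10_gt[OF big] unfolding D_def by simp
  moreover have "binary_ones n \<le> 3 * k + 1"
    using binary_ones_le[of n "k + 1"] k assms by simp
  moreover have "\<forall>d\<in>#D. d < 10" using digits10_lt_10 unfolding D_def by simp
  ultimately have "inV (image_mset real D) (real n)"
    using assms by (intro inV_of_nat_from_digits) auto
  then have "inV ({#5#} + image_mset real D) (5 powr real n)"
    using inV_powr[OF inV.single[of 5]] by simp
  moreover have "digit_mset (5 ^ n) = {#5#} + image_mset real D"
    using big five_pow_mod_10[of n] assms unfolding digit_mset_def D_def
    by (subst digits10.simps) auto
  ultimately show ?thesis
    unfolding selfcondensable_def by (simp add: powr_realpow)
qed

end
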